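(* Let $p$ be an intrinsic cross cap of a Whitney metric $d\sigma^2$ on a $2$-manifold, and let $(u,v)$ be a local coordinate system centered at $p$ that is adjusted at $p$, with $d\sigma^2=E\,du^2+2F\,du\,dv+G\,dv^2$ and $\delta:=EG-F^2$. Then at $(u,v)=(0,0)$, $$\delta_{uu}\delta_{vv}-\delta_{uv}^2=4E\Delta,\qquad \Delta:=\det\begin{pmatrix}E&F_u&F_v\\ F_u&G_{uu}/2&G_{uv}/2\\ F_v&G_{uv}/2&G_{vv}/2\end{pmatrix}\Bigg|_{(0,0)}.$$
   Context: For a smooth positive semi-definite metric $d\sigma^2$ with $\langle\cdot,\cdot\rangle=d\sigma^2$: singular points are where it is not positive definite; $\mathcal{N}_p$ is the null space; the Kossowski pseudo-connection is $\Gamma(X,Y,Z)=\tfrac12\bigl(X\langle Y,Z\rangle+Y\langle X,Z\rangle-Z\langle X,Y\rangle+\langle[X,Y],Z\rangle-\langle[X,Z],Y\rangle-\langle[Y,Z],X\rangle\bigr)$; admissible: at each singular point $p$, $\Gamma(V_1,V_2,V_3)(p)=0$ whenever $V_3(p)\in\mathcal{N}_p$. A singular point $p$ of an admissible metric is an intrinsic cross cap if in local coordinates $(u,v)$ centered at $p$, with $\delta=EG-F^2$, $\delta_{uu}\delta_{vv}-\delta_{uv}^2\ne0$ at $p$. A Whitney metric is an admissible metric all of whose singular points are intrinsic cross caps. A coordinate system $(u,v)$ is adjusted at $p$ if $\partial_v\in\mathcal{N}_p$. *)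

theory Defs
  imports "HOL-Analysis.Analysis"
begin

text \<open>We work in a coordinate chart: an open set U of the (u,v)-plane, modelled as real \<times> real.
  Scalar functions are of type real \<times> real \<Rightarrow> real; vector fields are pairs of component
  functions (coefficients of d/du and d/dv).\<close>

type_synonym sfun = "real \<times> real \<Rightarrow> real"
type_synonym vfield = "sfun \<times> sfun"

definition pu :: "sfun \<Rightarrow> sfun" where
  "pu f = (\<lambda>(u,v). deriv (\<lambda>t. f (t, v)) u)"

definition pv :: "sfun \<Rightarrow> sfun" where
  "pv f = (\<lambda>(u,v). deriv (\<lambda>t. f (u, t)) v)"

text \<open>Iterated partial derivatives: True = d/du, False = d/dv.\<close>
fun pd :: "bool list \<Rightarrow> sfun \<Rightarrow> sfun" where
  "pd [] f = f"
| "pd (b # bs) f = (if b then pu else pv) (pd bs f)"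

definition smooth_on :: "(real \<times> real) set \<Rightarrow> sfun \<Rightarrow> bool" where
  "smooth_on U f \<longleftrightarrow> (\<forall>bs. pd bs f differentiable_on U)"

definition smooth_vf :: "(real \<times> real) set \<Rightarrow> vfield \<Rightarrow> bool" where
  "smooth_vf U X \<longleftrightarrow> smooth_on U (fst X) \<and> smooth_on U (snd X)"

definition mform :: "sfun \<Rightarrow> sfun \<Rightarrow> sfun \<Rightarrow> real \<times> real \<Rightarrow> real \<times> real \<Rightarrow> real \<times> real \<Rightarrow> real" where
  "mform E F G q w z = E q * fst w * fst z + F q * (fst w * snd z + snd w * fst z) + G q * snd w * snd z"

definition psd_metric :: "(real \<times> real) set \<Rightarrow> sfun \<Rightarrow> sfun \<Rightarrow> sfun \<Rightarrow> bool" where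
  "psd_metric U E F G \<longleftrightarrow> smooth_on U E \<and> smooth_on U F \<and> smooth_on U G \<and>
     (\<forall>q\<in>U. \<forall>w. mform E F G q w w \<ge> 0)"

definition singular_pt :: "sfun \<Rightarrow> sfun \<Rightarrow> sfun \<Rightarrow> real \<times> real \<Rightarrow> bool" where
  "singular_pt E F G q \<longleftrightarrow> \<not> (\<forall>w. w \<noteq> 0 \<longrightarrow> mform E F G q w w > 0)"

definition null_space :: "sfun \<Rightarrow> sfun \<Rightarrow> sfun \<Rightarrow> real \<times> real \<Rightarrow> (real \<times> real) set" where
  "null_space E F G q = {w. \<forall>z. mform E F G q w z = 0}"

definition ip :: "sfun \<Rightarrow> sfun \<Rightarrow> sfun \<Rightarrow> vfield \<Rightarrow> vfield \<Rightarrow> sfun" where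
  "ip E F G X Y = (\<lambda>q. mform E F G q (fst X q, snd X q) (fst Y q, snd Y q))"

definition vder :: "vfield \<Rightarrow> sfun \<Rightarrow> sfun" where
  "vder X f = (\<lambda>q. fst X q * pu f q + snd X q * pv f q)"

definition lie :: "vfield \<Rightarrow> vfield \<Rightarrow> vfield" where
  "lie X Y = ((\<lambda>q. vder X (fst Y) q - vder Y (fst X) q),
              (\<lambda>q. vder X (snd Y) q - vder Y (snd X) q))"

definition kossowski :: "sfun \<Rightarrow> sfun \<Rightarrow> sfun \<Rightarrow> vfield \<Rightarrow> vfield \<Rightarrow> vfield \<Rightarrow> sfun" where
  "kossowski E F G X Y Z = (\<lambda>q. (1/2) *
     (vder X (ip E F G Y Z) q + vder Y (ip E F G X Z) q - vder Z (ip E F G X Y) q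
      + ip E F G (lie X Y) Z q - ip E F G (lie X Z) Y q - ip E F G (lie Y Z) X q))"

definition admissible :: "(real \<times> real) set \<Rightarrow> sfun \<Rightarrow> sfun \<Rightarrow> sfun \<Rightarrow> bool" where
  "admissible U E F G \<longleftrightarrow> psd_metric U E F G \<and>
     (\<forall>q\<in>U. singular_pt E F G q \<longrightarrow>
        (\<forall>V1 V2 V3. smooth_vf U V1 \<longrightarrow> smooth_vf U V2 \<longrightarrow> smooth_vf U V3 \<longrightarrow>
           (fst V3 q, snd V3 q) \<in> null_space E F G q \<longrightarrow> kossowski E F G V1 V2 V3 q = 0))"

definition delta :: "sfun \<Rightarrow> sfun \<Rightarrow> sfun \<Rightarrow> sfun" where
  "delta E F G = (\<lambda>q. E q * G q - (F q)\<^sup>2)"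

text \<open>Intrinsic cross cap (Hessian determinant of delta nonzero, computed in the chart
  coordinates translated to be centered at q -- translation does not change derivatives).\<close>
definition intrinsic_cross_cap :: "(real \<times> real) set \<Rightarrow> sfun \<Rightarrow> sfun \<Rightarrow> sfun \<Rightarrow> real \<times> real \<Rightarrow> bool" where
  "intrinsic_cross_cap U E F G q \<longleftrightarrow> admissible U E F G \<and> q \<in> U \<and> singular_pt E F G q \<and>
     (let d = delta E F G in pu (pu d) q * pv (pv d) q - (pu (pv d) q)\<^sup>2 \<noteq> 0)"

definition whitney_metric :: "(real \<times> real) set \<Rightarrow> sfun \<Rightarrow> sfun \<Rightarrow> sfun \<Rightarrow> bool" where
  "whitney_metric U E F G \<longleftrightarrow> admissible U E F G \<and>
     (\<forall>q\<in>U. singular_pt E F G q \<longrightarrow> intrinsic_cross_cap U E F G q)"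

definition adjusted_at :: "sfun \<Rightarrow> sfun \<Rightarrow> sfun \<Rightarrow> real \<times> real \<Rightarrow> bool" where
  "adjusted_at E F G q \<longleftrightarrow> (0, 1) \<in> null_space E F G q"

end

theory Submission
  imports Defs
begin

text \<open>
  Adjustedness means F and G vanish at p; since G \<ge> 0 by positive semi-definiteness, p is a
  minimum of G, so G_u and G_v vanish there as well. Differentiating \<delta> = EG - F^2 twice,
  every term containing F, G or a first partial of G drops out at p, leaving
  \<delta>_uu = E G_uu - 2F_u^2, \<delta>_vv = E G_vv - 2F_v^2, \<delta>_uv = E G_uv - 2F_uF_v,
  and the claim is an algebraic identity between these and the determinant.
  Only positive semi-definiteness and adjustedness enter.
\<close>

lemma has_real_derivative_pu:
  assumes "f differentiable at (u, v)"
  shows "((\<lambda>t. f (t, v)) has_real_derivative pu f (u, v)) (at u)"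
proof -
  have "(\<lambda>t. f (t, v)) differentiable at u"
    using differentiable_chain_at[of "\<lambda>t. (t, v)" u f] assms by (simp add: o_def)
  then show ?thesis
    unfolding pu_def by (simp add: DERIV_deriv_iff_real_differentiable)
qed

lemma has_real_derivative_pv:
  assumes "f differentiable at (u, v)"
  shows "((\<lambda>t. f (u, t)) has_real_derivative pv f (u, v)) (at v)"
proof -
  have "(\<lambda>t. f (u, t)) differentiable at v"
    using differentiable_chain_at[of "\<lambda>t. (u, t)" v f] assms by (simp add: o_def)
  then show ?thesis
    unfolding pv_def by (simp add: DERIV_deriv_iff_real_differentiable)
qed

lemma pu_eqI: "((\<lambda>t. f (t, v)) has_real_derivative D) (at u) \<Longrightarrow> pu f (u, v) = D"
  unfolding pu_def by (simp add: DERIV_imp_deriv)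

lemma pv_eqI: "((\<lambda>t. f (u, t)) has_real_derivative D) (at v) \<Longrightarrow> pv f (u, v) = D"
  unfolding pv_def by (simp add: DERIV_imp_deriv)

lemma
  assumes "f differentiable at q" and "g differentiable at q"
  shows pu_add: "pu (\<lambda>x. f x + g x) q = pu f q + pu g q"
    and pu_diff: "pu (\<lambda>x. f x - g x) q = pu f q - pu g q"
    and pu_mult: "pu (\<lambda>x. f x * g x) q = pu f q * g q + f q * pu g q"
  using assms by (cases q; auto intro!: pu_eqI derivative_eq_intros has_real_derivative_pu)+

lemma
  assumes "f differentiable at q" and "g differentiable at q"
  shows pv_add: "pv (\<lambda>x. f x + g x) q = pv f q + pv g q"
    and pv_diff: "pv (\<lambda>x. f x - g x) q = pv f q - pv g q"
    and pv_mult: "pv (\<lambda>x. f x * g x) q = pv f q * g q + f q * pv g q"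
  using assms by (cases q; auto intro!: pv_eqI derivative_eq_intros has_real_derivative_pv)+

lemma pu_cong:
  assumes "open U" "q \<in> U" "\<And>x. x \<in> U \<Longrightarrow> f x = g x"
  shows "pu f q = pu g q"
proof (cases q)
  case (Pair u v)
  have "\<forall>\<^sub>F x in nhds (u, v). x \<in> U"
    using assms(1,2) Pair by (simp add: eventually_nhds_in_open)
  moreover have "((\<lambda>t. (t, v)) \<longlongrightarrow> (u, v)) (nhds u)"
    by (simp add: tendsto_Pair filterlim_ident)
  ultimately have "\<forall>\<^sub>F t in nhds u. (t, v) \<in> U"
    by (rule eventually_compose_filterlim)
  then have "\<forall>\<^sub>F t in nhds u. f (t, v) = g (t, v)"
    by (rule eventually_mono) (simp add: assms(3))
  then show ?thesis
    unfolding Pair pu_def by (simp add: deriv_cong_ev)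
qed

lemma pv_cong:
  assumes "open U" "q \<in> U" "\<And>x. x \<in> U \<Longrightarrow> f x = g x"
  shows "pv f q = pv g q"
proof (cases q)
  case (Pair u v)
  have "\<forall>\<^sub>F x in nhds (u, v). x \<in> U"
    using assms(1,2) Pair by (simp add: eventually_nhds_in_open)
  moreover have "((\<lambda>t. (u, t)) \<longlongrightarrow> (u, v)) (nhds v)"
    by (simp add: tendsto_Pair filterlim_ident)
  ultimately have "\<forall>\<^sub>F t in nhds v. (u, t) \<in> U"
    by (rule eventually_compose_filterlim)
  then have "\<forall>\<^sub>F t in nhds v. f (u, t) = g (u, t)"
    by (rule eventually_mono) (simp add: assms(3))
  then show ?thesis
    unfolding Pair pv_def by (simp add: deriv_cong_ev)
qed

lemma
  assumes "open U" "q \<in> U" "f differentiable at q" "\<And>x. x \<in> U \<Longrightarrow> f q \<le> f x"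
  shows pu_eq_0_at_min: "pu f q = 0"
    and pv_eq_0_at_min: "pv f q = 0"
proof -
  obtain u v where q: "q = (u, v)" by fastforce
  obtain e where e: "e > 0" "ball q e \<subseteq> U"
    using assms(1,2) open_contains_ball by blast
  have near: "(s, t) \<in> U" if "\<bar>u - s\<bar> < e" "\<bar>v - t\<bar> < e" "s = u \<or> t = v" for s t
    using that e(2) by (auto simp: q dist_Pair_Pair dist_real_def)
  show "pu f q = 0"
    using DERIV_local_min[OF has_real_derivative_pu[OF assms(3)[unfolded q]] e(1)]
      assms(4) near q by auto
  show "pv f q = 0"
    using DERIV_local_min[OF has_real_derivative_pv[OF assms(3)[unfolded q]] e(1)]
      assms(4) near q by auto
qed

lemma smooth_on_differentiable_at:
  "smooth_on U f \<Longrightarrow> open U \<Longrightarrow> q \<in> U \<Longrightarrow> pd bs f differentiable at q"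
  unfolding smooth_on_def using differentiable_on_eq_differentiable_at by blast

lemma psd_metric_G_nonneg:
  assumes "psd_metric U E F G" "q \<in> U"
  shows "0 \<le> G q"
proof -
  have "0 \<le> mform E F G q (0, 1) (0, 1)"
    using assms unfolding psd_metric_def by blast
  then show ?thesis
    by (simp add: mform_def)
qed

lemma adjusted_atD:
  assumes "adjusted_at E F G q"
  shows "F q = 0" "G q = 0"
proof -
  have "\<forall>z. mform E F G q (0, 1) z = 0"
    using assms unfolding adjusted_at_def null_space_def by blast
  from this[rule_format, of "(1, 0)"] this[rule_format, of "(0, 1)"]
  show "F q = 0" "G q = 0"
    by (simp_all add: mform_def)
qed

lemma
  assumes "E differentiable at q" "F differentiable at q" "G differentiable at q"
  shows pu_delta: "pu (delta E F G) q = pu E q * G q + E q * pu G q - (pu F q * F q + F q * pu F q)"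
    and pv_delta: "pv (delta E F G) q = pv E q * G q + E q * pv G q - (pv F q * F q + F q * pv F q)"
  using assms unfolding delta_def power2_eq_square
  by (simp_all add: pu_diff pu_mult pv_diff pv_mult)

lemma delta_hessian:
  assumes "open U" "q \<in> U" "smooth_on U E" "smooth_on U F" "smooth_on U G"
    and "F q = 0" "G q = 0" "pu G q = 0" "pv G q = 0"
  shows "pu (pu (delta E F G)) q = E q * pu (pu G) q - 2 * (pu F q)\<^sup>2"
    and "pv (pv (delta E F G)) q = E q * pv (pv G) q - 2 * (pv F q)\<^sup>2"
    and "pu (pv (delta E F G)) q = E q * pu (pv G) q - 2 * pu F q * pv F q"
proof -
  have diff: "pd bs E differentiable at x" "pd bs F differentiable at x" "pd bs G differentiable at x"
    if "x \<in> U" for bs x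
    using assms(1,3-5) that by (auto intro: smooth_on_differentiable_at)
  note diff1 = diff[where bs = "[]"] diff[where bs = "[True]"] diff[where bs = "[False]"]
  note diff1_q = diff1[OF assms(2), simplified]
  have "pu (pu (delta E F G)) q
      = pu (\<lambda>x. pu E x * G x + E x * pu G x - (pu F x * F x + F x * pu F x)) q"
    using diff1 by (intro pu_cong[OF assms(1,2)]) (simp add: pu_delta)
  then show "pu (pu (delta E F G)) q = E q * pu (pu G) q - 2 * (pu F q)\<^sup>2"
    using diff1_q assms(6-8) by (simp add: pu_add pu_diff pu_mult power2_eq_square)
  have "pv (pv (delta E F G)) q
      = pv (\<lambda>x. pv E x * G x + E x * pv G x - (pv F x * F x + F x * pv F x)) q"
    using diff1 by (intro pv_cong[OF assms(1,2)]) (simp add: pv_delta)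
  then show "pv (pv (delta E F G)) q = E q * pv (pv G) q - 2 * (pv F q)\<^sup>2"
    using diff1_q assms(6,7,9) by (simp add: pv_add pv_diff pv_mult power2_eq_square)
  have "pu (pv (delta E F G)) q
      = pu (\<lambda>x. pv E x * G x + E x * pv G x - (pv F x * F x + F x * pv F x)) q"
    using diff1 by (intro pu_cong[OF assms(1,2)]) (simp add: pv_delta)
  then show "pu (pv (delta E F G)) q = E q * pu (pv G) q - 2 * pu F q * pv F q"
    using diff1_q assms(6-9) by (simp add: pu_add pu_diff pu_mult)
qed

lemma hessian_det_eq_det3:
  fixes a b c p q r :: real
  shows "(a * p - 2 * b\<^sup>2) * (a * r - 2 * c\<^sup>2) - (a * q - 2 * b * c)\<^sup>2
    = 4 * a * det (vector [vector [a, b, c], vector [b, p / 2, q / 2],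
                           vector [c, q / 2, r / 2]] :: real^3^3)"
  unfolding det_3 vector_3 by (simp add: field_simps power2_eq_square)

theorem proposition4p4:
  fixes U :: "(real \<times> real) set" and E F G :: "real \<times> real \<Rightarrow> real"
  assumes "open U" and "(0, 0) \<in> U"
    and "whitney_metric U E F G"
    and "intrinsic_cross_cap U E F G (0, 0)"
    and "adjusted_at E F G (0, 0)"
  shows "(let d = delta E F G in
            pu (pu d) (0,0) * pv (pv d) (0,0) - (pu (pv d) (0,0))\<^sup>2)
         = 4 * E (0,0) *
           det (vector [vector [E (0,0), pu F (0,0), pv F (0,0)],
                        vector [pu F (0,0), pu (pu G) (0,0) / 2, pu (pv G) (0,0) / 2],
                        vector [pv F (0,0), pu (pv G) (0,0) / 2, pv (pv G) (0,0) / 2]] :: real^3^3)"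
proof -
  have psd: "psd_metric U E F G"
    using assms(3) unfolding whitney_metric_def admissible_def by blast
  then have smooth: "smooth_on U E" "smooth_on U F" "smooth_on U G"
    unfolding psd_metric_def by auto
  have F0: "F (0, 0) = 0" and G0: "G (0, 0) = 0"
    using adjusted_atD[OF assms(5)] by auto
  have G_min: "G (0, 0) \<le> G x" if "x \<in> U" for x
    using psd_metric_G_nonneg[OF psd that] G0 by simp
  have G_diff: "G differentiable at (0, 0)"
    using smooth_on_differentiable_at[OF smooth(3) assms(1,2), of "[]"] by simp
  have Gu0: "pu G (0, 0) = 0" and Gv0: "pv G (0, 0) = 0"
    using pu_eq_0_at_min[OF assms(1,2) G_diff G_min] pv_eq_0_at_min[OF assms(1,2) G_diff G_min]
    by auto
  show ?thesis
    unfolding Let_def delta_hessian[OF assms(1,2) smooth F0 G0 Gu0 Gv0]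
    by (rule hessian_det_eq_det3)
qed

end
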